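(* Let $g,h>\tfrac12$, $M_{\mathrm{I}},M_{\mathrm{II}}\in\mathbb{Z}_{\ge0}$, $M=M_{\mathrm{I}}+M_{\mathrm{II}}$, $M'=\frac12(M_{\mathrm{I}}-M_{\mathrm{II}})$, let $\mathcal{D}=((d_1,t_1),\ldots,(d_M,t_M))$ be an ordered list of pairwise distinct seed labels as in the context with $M_{\mathrm{I}}$ of Type I and $M_{\mathrm{II}}$ of Type II, and let $n\in\mathbb{Z}_{\ge0}$. For a seed label set $\xi_{(\mathrm{v},\mathrm{I})}(\eta)=P^{(g-\frac12,\frac12-h)}_{\mathrm{v}}(\eta)$, $\xi_{(\mathrm{v},\mathrm{II})}(\eta)=P^{(\frac12-g,h-\frac12)}_{\mathrm{v}}(\eta)$, $\tilde{\mathcal{E}}_{(\mathrm{v},\mathrm{I})}=-4(g+\mathrm{v}+\frac12)(h-\mathrm{v}-\frac12)$, $\tilde{\mathcal{E}}_{(\mathrm{v},\mathrm{II})}=-4(g-\mathrm{v}-\frac12)(h+\mathrm{v}+\frac12)$, $\tilde\zeta_{(\mathrm{v},\mathrm{I})}(\eta)=(h-\frac12-\mathrm{v})(1-\eta)P^{(g+\frac12,-h-\frac12)}_{\mathrm{v}}(\eta)$, $\tilde\zeta_{(\mathrm{v},\mathrm{II})}(\eta)=-(g-\frac12-\mathrm{v})(1+\eta)P^{(-g-\frac12,h+\frac12)}_{\mathrm{v}}(\eta)$, and set $\mathcal{E}_n=4n(n+g+h)$, $\zeta_n(\eta)=-\frac12(n+g+h)(1-\eta^2)P^{(g+\frac12,h+\frac12)}_{n-1}(\eta)$.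 Define the $(M+1)\times(M+1)$ matrix $(a_{j,k})$ by: for $1\le k\le M$, $a_{2l-1,k}=(-\tilde{\mathcal{E}}_{(d_k,t_k)})^{l-1}\xi_{(d_k,t_k)}(\eta)$, $a_{2l,k}=(-\tilde{\mathcal{E}}_{(d_k,t_k)})^{l-1}\tilde\zeta_{(d_k,t_k)}(\eta)$; and $a_{2l-1,M+1}=(-\mathcal{E}_n)^{l-1}P^{(g-\frac12,h-\frac12)}_n(\eta)$, $a_{2l,M+1}=(-\mathcal{E}_n)^{l-1}\zeta_n(\eta)$ (for $1\le l\le[\frac{M+2}{2}]$ in odd rows, $1\le l\le[\frac{M+1}{2}]$ in even rows). Define the $M\times M$ matrix $(b_{j,k})$ by $b_{2l-1,k}=(-\tilde{\mathcal{E}}_{(d_k,t_k)})^{l-1}\xi_{(d_k,t_k)}(\eta)$, $1\le l\le[\frac{M+1}{2}]$, and $b_{2l,k}=(-\tilde{\mathcal{E}}_{(d_k,t_k)})^{l-1}\tilde\zeta_{(d_k,t_k)}(\eta)$, $1\le l\le[\frac M2]$. Then for $-1<\eta<1$, $$P_{\mathcal{D},n}(\eta)=(-4)^{-\frac12M(M+1)}\det(a_{j,k})\Big(\frac{1-\eta}{2}\Big)^{-([M']+1)([M']+M-2[\frac M2])}\Big(\frac{1+\eta}{2}\Big)^{-([-M']+1)([-M']+M-2[\frac M2])},$$ $$\Xi_{\mathcal{D}}(\eta)=(-4)^{-\frac12M(M-1)}\det(b_{j,k})\Big(\frac{1-\eta}{2}\cdot\frac{1+\eta}{2}\Big)^{-[M']([M']+M-2[\frac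 M2])}.$$
   Context: $[a]$ denotes the greatest integer not exceeding $a$, and $[a]'$ the greatest integer strictly less than $a$. $(a)_k=a(a+1)\cdots(a+k-1)$, $(a)_0=1$. For real $\alpha,\beta$ and $m\in\mathbb{Z}_{\ge0}$, $P^{(\alpha,\beta)}_m(\eta)=\frac{1}{m!}\sum_{k=0}^m\frac{(-m)_k(m+\alpha+\beta+1)_k(\alpha+k+1)_{m-k}}{k!}\big(\frac{1-\eta}{2}\big)^k$ (the Jacobi polynomial), and $P^{(\alpha,\beta)}_m\equiv0$ for $m<0$. Fix $g,h>\frac12$. A seed label is a pair $(\mathrm{v},t)$, $t\in\{\mathrm{I},\mathrm{II}\}$, with $\mathrm{v}\in\{0,\ldots,[h-\frac12]'\}$ if $t=\mathrm{I}$ and $\mathrm{v}\in\{0,\ldots,[g-\frac12]'\}$ if $t=\mathrm{II}$. For $-1<\eta<1$ let $\mu_{(\mathrm{v},\mathrm{I})}(\eta)=\big(\frac{1+\eta}{2}\big)^{\frac12-h}P^{(g-\frac12,\frac12-h)}_{\mathrm{v}}(\eta)$, $\mu_{(\mathrm{v},\mathrm{II})}(\eta)=\big(\frac{1-\eta}{2}\big)^{\frac12-g}P^{(\frac12-g,h-\frac12)}_{\mathrm{v}}(\eta)$, $P_n(\eta)=P^{(g-\frac12,h-\frac12)}_n(\eta)$, and $\mathrm{W}[f_1,\ldots,f_m](\eta)=\det\big(\frac{d^{j-1}f_k}{d\eta^{j-1}}\big)_{1\le j,k\le m}$. For $\mathcal{D}$ as in the claim, $\Xi_{\mathcal{D}}(\eta)=\mathrm{W}[\mu_{(d_1,t_1)},\ldots,\mu_{(d_M,t_M)}](\eta)\big(\frac{1-\eta}{2}\big)^{(M_{\mathrm{I}}+g-\frac12)M_{\mathrm{II}}}\big(\frac{1+\eta}{2}\big)^{(M_{\mathrm{II}}+h-\frac12)M_{\mathrm{I}}}$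 and $P_{\mathcal{D},n}(\eta)=\mathrm{W}[\mu_{(d_1,t_1)},\ldots,\mu_{(d_M,t_M)},P_n](\eta)\big(\frac{1-\eta}{2}\big)^{(M_{\mathrm{I}}+g+\frac12)M_{\mathrm{II}}}\big(\frac{1+\eta}{2}\big)^{(M_{\mathrm{II}}+h+\frac12)M_{\mathrm{I}}}$ (the multi-indexed Jacobi polynomials). *)

theory Defs
  imports Complex_Main "HOL-Analysis.Derivative" "Jordan_Normal_Form.Determinant"
begin

definition jacobiP :: "real \<Rightarrow> real \<Rightarrow> int \<Rightarrow> real \<Rightarrow> real" where
  "jacobiP a b m x = (if m < 0 then 0 else
     (let m' = nat m in
      (1 / fact m') * (\<Sum>k\<le>m'. pochhammer (- real m') k * pochhammer (real m' + a + b + 1) k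
          * pochhammer (a + real k + 1) (m' - k) / fact k * ((1 - x) / 2) ^ k)))"

datatype seedtype = TI | TII

text \<open>Seed label (v,t) is admissible: v <= [h-1/2]' (type I), v <= [g-1/2]' (type II),
  i.e. v is a nonnegative integer strictly less than h-1/2 resp. g-1/2.\<close>
definition seed_ok :: "real \<Rightarrow> real \<Rightarrow> nat \<times> seedtype \<Rightarrow> bool" where
  "seed_ok g h D = (case D of (v, TI) \<Rightarrow> real v < h - 1/2 | (v, TII) \<Rightarrow> real v < g - 1/2)"

definition MI :: "(nat \<times> seedtype) list \<Rightarrow> nat" where
  "MI D = length (filter (\<lambda>d. snd d = TI) D)"
definition MII :: "(nat \<times> seedtype) list \<Rightarrow> nat" where
  "MII D = length (filter (\<lambda>d. snd d = TII) D)"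

definition mu :: "real \<Rightarrow> real \<Rightarrow> nat \<times> seedtype \<Rightarrow> real \<Rightarrow> real" where
  "mu g h D x = (case D of
     (v, TI) \<Rightarrow> ((1 + x) / 2) powr (1/2 - h) * jacobiP (g - 1/2) (1/2 - h) (int v) x
   | (v, TII) \<Rightarrow> ((1 - x) / 2) powr (1/2 - g) * jacobiP (1/2 - g) (h - 1/2) (int v) x)"

definition Pn :: "real \<Rightarrow> real \<Rightarrow> nat \<Rightarrow> real \<Rightarrow> real" where
  "Pn g h n x = jacobiP (g - 1/2) (h - 1/2) (int n) x"

definition wronskian :: "(real \<Rightarrow> real) list \<Rightarrow> real \<Rightarrow> real" where
  "wronskian fs x = det (mat (length fs) (length fs) (\<lambda>(j, k). (deriv ^^ j) (fs ! k) x))"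

definition XiD :: "real \<Rightarrow> real \<Rightarrow> (nat \<times> seedtype) list \<Rightarrow> real \<Rightarrow> real" where
  "XiD g h D x = wronskian (map (mu g h) D) x
     * ((1 - x) / 2) powr ((real (MI D) + g - 1/2) * real (MII D))
     * ((1 + x) / 2) powr ((real (MII D) + h - 1/2) * real (MI D))"

definition PD :: "real \<Rightarrow> real \<Rightarrow> (nat \<times> seedtype) list \<Rightarrow> nat \<Rightarrow> real \<Rightarrow> real" where
  "PD g h D n x = wronskian (map (mu g h) D @ [Pn g h n]) x
     * ((1 - x) / 2) powr ((real (MI D) + g + 1/2) * real (MII D))
     * ((1 + x) / 2) powr ((real (MII D) + h + 1/2) * real (MI D))"

definition xi :: "real \<Rightarrow> real \<Rightarrow> nat \<times> seedtype \<Rightarrow> real \<Rightarrow> real" where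
  "xi g h D x = (case D of
     (v, TI) \<Rightarrow> jacobiP (g - 1/2) (1/2 - h) (int v) x
   | (v, TII) \<Rightarrow> jacobiP (1/2 - g) (h - 1/2) (int v) x)"

definition Etil :: "real \<Rightarrow> real \<Rightarrow> nat \<times> seedtype \<Rightarrow> real" where
  "Etil g h D = (case D of
     (v, TI) \<Rightarrow> -4 * (g + real v + 1/2) * (h - real v - 1/2)
   | (v, TII) \<Rightarrow> -4 * (g - real v - 1/2) * (h + real v + 1/2))"

definition zetatil :: "real \<Rightarrow> real \<Rightarrow> nat \<times> seedtype \<Rightarrow> real \<Rightarrow> real" where
  "zetatil g h D x = (case D of
     (v, TI) \<Rightarrow> (h - 1/2 - real v) * (1 - x) * jacobiP (g + 1/2) (- h - 1/2) (int v) x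
   | (v, TII) \<Rightarrow> - (g - 1/2 - real v) * (1 + x) * jacobiP (- g - 1/2) (h + 1/2) (int v) x)"

definition En :: "real \<Rightarrow> real \<Rightarrow> nat \<Rightarrow> real" where
  "En g h n = 4 * real n * (real n + g + h)"

definition zetan :: "real \<Rightarrow> real \<Rightarrow> nat \<Rightarrow> real \<Rightarrow> real" where
  "zetan g h n x = - (1/2) * (real n + g + h) * (1 - x^2) * jacobiP (g + 1/2) (h + 1/2) (int n - 1) x"

text \<open>Matrices (0-indexed rows i = j-1: row j = 2l-1 (i even) has l-1 = i div 2,
  row j = 2l (i odd) has l-1 = i div 2).\<close>
definition amat :: "real \<Rightarrow> real \<Rightarrow> (nat \<times> seedtype) list \<Rightarrow> nat \<Rightarrow> real \<Rightarrow> real mat" where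
  "amat g h D n x = mat (length D + 1) (length D + 1) (\<lambda>(i, k).
     if k < length D then
       (- Etil g h (D ! k)) ^ (i div 2) * (if even i then xi g h (D ! k) x else zetatil g h (D ! k) x)
     else
       (- En g h n) ^ (i div 2) * (if even i then Pn g h n x else zetan g h n x))"

definition bmat :: "real \<Rightarrow> real \<Rightarrow> (nat \<times> seedtype) list \<Rightarrow> real \<Rightarrow> real mat" where
  "bmat g h D x = mat (length D) (length D) (\<lambda>(i, k).
       (- Etil g h (D ! k)) ^ (i div 2) * (if even i then xi g h (D ! k) x else zetatil g h (D ! k) x))"

end

theory Submission
  imports Defs
begin

text \<open>
  Every seed function \<mu>_d and P_n solves one and the same equation
  (1 - \<eta>^2) f'' = r f' + \<lambda>/4 f with r = g - h + (g + h + 1) \<eta>, where \<lambda> = -Etil_d resp. -E_n: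
  they are gauge transforms ((1 - \<eta>)/2)^A ((1 + \<eta>)/2)^B P((1 - \<eta>)/2) of Jacobi polynomials, and
  the equation is the hypergeometric equation of P.  On such solutions, differentiating j times
  expresses f^(j) through the vector (f, f', \<lambda> f, \<lambda> f', \<lambda>^2 f, ...) with coefficients that depend
  only on r and vanish above the diagonal, the diagonal being (4 (1 - \<eta>^2))^-(j div 2).  So the
  Wronskian matrix is a lower triangular matrix times the matrix of these vectors.  Since
  f = gauge * \<xi> and, by the contiguous relations, f' = - gauge * \<zeta> / (1 - \<eta>^2), the latter
  matrix is (a) resp. (b) with scaled rows and columns; counting the powers of (1 \<mp> \<eta>)/2
  produced this way gives the exponents.
\<close>

section \<open>Jacobi polynomials as polynomials in (1 - x)/2\<close>

definition jacobi_coeff :: "real \<Rightarrow> real \<Rightarrow> nat \<Rightarrow> nat \<Rightarrow> real" where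
  "jacobi_coeff a b m k = pochhammer (- real m) k * pochhammer (real m + a + b + 1) k
      * pochhammer (a + real k + 1) (m - k) / (fact m * fact k)"

definition jacobi_poly :: "real \<Rightarrow> real \<Rightarrow> nat \<Rightarrow> real poly" where
  "jacobi_poly a b m = (\<Sum>k\<le>m. monom (jacobi_coeff a b m k) k)"

lemma jacobi_coeff_eq_0: "m < k \<Longrightarrow> jacobi_coeff a b m k = 0"
  unfolding jacobi_coeff_def by (simp add: pochhammer_of_nat_eq_0_iff)

lemma coeff_jacobi_poly: "coeff (jacobi_poly a b m) k = jacobi_coeff a b m k"
  unfolding jacobi_poly_def by (auto simp: coeff_sum coeff_monom jacobi_coeff_eq_0)

lemma jacobiP_eq_poly: "jacobiP a b (int m) x = poly (jacobi_poly a b m) ((1 - x) / 2)"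
  unfolding jacobiP_def jacobi_poly_def jacobi_coeff_def
  by (simp add: poly_sum poly_monom sum_distrib_left field_simps)

lemma jacobi_coeff_Suc_Suc:
  "real (Suc k) * jacobi_coeff a b (Suc m) (Suc k) = - (real m + a + b + 2) * jacobi_coeff (a + 1) (b + 1) m k"
proof (cases "k \<le> m")
  case False
  then show ?thesis by (simp add: jacobi_coeff_eq_0)
next
  case True
  have "pochhammer (- real (Suc m)) (Suc k) = - real (Suc m) * pochhammer (- real m) k"
    and "pochhammer (real (Suc m) + a + b + 1) (Suc k)
      = (real m + a + b + 2) * pochhammer (real m + (a + 1) + (b + 1) + 1) k"
    and "pochhammer (a + real (Suc k) + 1) (Suc m - Suc k) = pochhammer ((a + 1) + real k + 1) (m - k)"
    by (simp_all add: pochhammer_rec algebra_simps)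
  then show ?thesis
    unfolding jacobi_coeff_def by (simp add: fact_Suc field_simps del: of_nat_Suc)
qed

lemma pderiv_jacobi_poly:
  "pderiv (jacobi_poly a b (Suc m)) = smult (- (real m + a + b + 2)) (jacobi_poly (a + 1) (b + 1) m)"
  by (rule poly_eqI) (simp only: coeff_pderiv coeff_jacobi_poly jacobi_coeff_Suc_Suc coeff_smult)

lemma jacobi_coeff_recurrence:
  "real (Suc k) * (real k + a + 1) * jacobi_coeff a b m (Suc k)
     = (real k - real m) * (real k + real m + a + b + 1) * jacobi_coeff a b m k"
proof (cases "k < m")
  case False
  then consider "k = m" | "m < k" by linarith
  then show ?thesis by cases (simp_all add: jacobi_coeff_eq_0)
next
  case True
  then have "m - k = Suc (m - Suc k)" by simp
  then have p: "pochhammer (a + real k + 1) (m - k) = (real k + a + 1) * pochhammer (a + real (Suc k) + 1) (m - Suc k)"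
    by (simp add: pochhammer_rec algebra_simps)
  have "pochhammer (- real m) (Suc k) = pochhammer (- real m) k * (real k - real m)"
    and "pochhammer (real m + a + b + 1) (Suc k) = pochhammer (real m + a + b + 1) k * (real k + real m + a + b + 1)"
    and "(fact (Suc k) :: real) = real (Suc k) * fact k"
    by (simp_all add: pochhammer_Suc algebra_simps)
  note eqs = this p
  show ?thesis
    unfolding jacobi_coeff_def eqs by (simp add: field_simps del: of_nat_Suc)
qed

lemma jacobi_poly_ode:
  fixes a b t :: real and m :: nat
  defines "p \<equiv> jacobi_poly a b m"
  shows "t * (1 - t) * poly (pderiv (pderiv p)) t + (a + 1 - (a + b + 2) * t) * poly (pderiv p) t
     + real m * (real m + a + b + 1) * poly p t = 0"
proof -
  have "pCons 0 (pderiv (pderiv p)) - pCons 0 (pCons 0 (pderiv (pderiv p))) + smult (a + 1) (pderiv p)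
     - smult (a + b + 2) (pCons 0 (pderiv p)) + smult (real m * (real m + a + b + 1)) p = 0"
  proof (rule poly_eqI)
    fix k
    have "coeff (pCons 0 (pCons 0 q)) k = (if k < 2 then 0 else coeff q (k - 2))" for q :: "real poly"
      by (cases k; cases "k - 1") auto
    then show "coeff (pCons 0 (pderiv (pderiv p)) - pCons 0 (pCons 0 (pderiv (pderiv p)))
        + smult (a + 1) (pderiv p) - smult (a + b + 2) (pCons 0 (pderiv p))
        + smult (real m * (real m + a + b + 1)) p) k = coeff 0 k"
      using jacobi_coeff_recurrence[of k a b m]
      by (cases k) (auto simp: coeff_pderiv coeff_pCons p_def coeff_jacobi_poly algebra_simps)
  qed
  from arg_cong[OF this, of "\<lambda>q. poly q t"] show ?thesis
    by (simp add: algebra_simps)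
qed

lemma jacobi_coeff_contiguous_b:
  "(real k + b) * jacobi_coeff a b v k - real (Suc k) * jacobi_coeff a b v (Suc k)
     = (b + real v) * jacobi_coeff (a + 1) (b - 1) v k"
proof -
  consider "k < v" | "k = v" | "v < k" by linarith
  then show ?thesis
  proof cases
    case 1
    define G where "G = pochhammer (- real v) k * pochhammer (real v + a + b + 1) k / (fact v * fact k)"
    define R where "R = pochhammer (a + real k + 2) (v - Suc k)"
    have v: "v - k = Suc (v - Suc k)" using 1 by simp
    have "jacobi_coeff a b v (Suc k) = G * (real k - real v) * (real v + a + b + 1 + real k) * R / real (Suc k)"
      unfolding jacobi_coeff_def G_def R_def by (simp add: pochhammer_Suc fact_Suc field_simps add_ac)
    moreover have "jacobi_coeff a b v k = G * (a + real k + 1) * R"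
      unfolding jacobi_coeff_def G_def R_def v by (simp add: pochhammer_rec field_simps add_ac)
    moreover have "pochhammer (a + 1 + real k + 1) (v - k) = R * (a + real v + 1)"
      unfolding v R_def pochhammer_Suc using 1 by (simp add: algebra_simps of_nat_diff)
    then have "jacobi_coeff (a + 1) (b - 1) v k = G * R * (a + real v + 1)"
      unfolding jacobi_coeff_def G_def by (simp add: field_simps add_ac)
    ultimately show ?thesis by (simp add: field_simps)
  next
    case 2
    then have "jacobi_coeff (a + 1) (b - 1) v k = jacobi_coeff a b v k"
      unfolding jacobi_coeff_def by (simp add: algebra_simps)
    with 2 show ?thesis by (simp add: jacobi_coeff_eq_0 algebra_simps)
  qed (simp add: jacobi_coeff_eq_0)
qed

lemma jacobi_poly_contiguous_b:
  "(t - 1) * poly (pderiv (jacobi_poly a b v)) t + b * poly (jacobi_poly a b v) t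
     = (b + real v) * poly (jacobi_poly (a + 1) (b - 1) v) t"
proof -
  have "pCons 0 (pderiv (jacobi_poly a b v)) - pderiv (jacobi_poly a b v) + smult b (jacobi_poly a b v)
      = smult (b + real v) (jacobi_poly (a + 1) (b - 1) v)"
  proof (rule poly_eqI)
    fix k
    show "coeff (pCons 0 (pderiv (jacobi_poly a b v)) - pderiv (jacobi_poly a b v) + smult b (jacobi_poly a b v)) k
        = coeff (smult (b + real v) (jacobi_poly (a + 1) (b - 1) v)) k"
      using jacobi_coeff_contiguous_b[of k b a v]
      by (cases k) (simp_all add: coeff_pderiv coeff_jacobi_poly algebra_simps)
  qed
  from arg_cong[OF this, of "\<lambda>q. poly q t"] show ?thesis
    by (simp add: algebra_simps)
qed

lemma jacobi_coeff_contiguous_a: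
  "(real k + a) * jacobi_coeff a b v k = (a + real v) * jacobi_coeff (a - 1) (b + 1) v k"
proof (cases "k \<le> v")
  case True
  define X where "X = pochhammer (- real v) k * pochhammer (real v + a + b + 1) k / (fact v * fact k)"
  have "(a + real k) * pochhammer (a + real k + 1) (v - k) = pochhammer (a + real k) (Suc (v - k))"
    by (simp add: pochhammer_rec)
  also have "\<dots> = (a + real v) * pochhammer (a + real k) (v - k)"
    unfolding pochhammer_Suc using True by (simp add: of_nat_diff)
  finally have "(real k + a) * (X * pochhammer (a + real k + 1) (v - k))
      = (a + real v) * (X * pochhammer (a + real k) (v - k))"
    by (simp add: ac_simps)
  moreover have "real v + (a - 1) + (b + 1) + 1 = real v + a + b + 1" "a - 1 + real k + 1 = a + real k"
    by simp_all
  ultimately show ?thesis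
    unfolding jacobi_coeff_def X_def by (simp add: ac_simps)
qed (simp add: jacobi_coeff_eq_0)

lemma jacobi_poly_contiguous_a:
  "t * poly (pderiv (jacobi_poly a b v)) t + a * poly (jacobi_poly a b v) t
     = (a + real v) * poly (jacobi_poly (a - 1) (b + 1) v) t"
proof -
  have "pCons 0 (pderiv (jacobi_poly a b v)) + smult a (jacobi_poly a b v)
      = smult (a + real v) (jacobi_poly (a - 1) (b + 1) v)"
  proof (rule poly_eqI)
    fix k
    show "coeff (pCons 0 (pderiv (jacobi_poly a b v)) + smult a (jacobi_poly a b v)) k
        = coeff (smult (a + real v) (jacobi_poly (a - 1) (b + 1) v)) k"
      using jacobi_coeff_contiguous_a[of k a b v]
      by (cases k) (simp_all add: coeff_pderiv coeff_jacobi_poly algebra_simps)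
  qed
  from arg_cong[OF this, of "\<lambda>q. poly q t"] show ?thesis
    by (simp add: algebra_simps)
qed

section \<open>Wronskians of solutions of the Jacobi equation\<close>

lemma one_minus_square_pos: "-1 < y \<Longrightarrow> y < 1 \<Longrightarrow> 0 < 1 - (y::real)\<^sup>2"
  by (simp add: abs_square_less_1)

definition jacobi_solution :: "real poly \<Rightarrow> real \<Rightarrow> (real \<Rightarrow> real) \<Rightarrow> bool" where
  "jacobi_solution r lam f \<longleftrightarrow> (\<forall>y\<in>{-1<..<1}. (f has_real_derivative deriv f y) (at y) \<and>
     (deriv f has_real_derivative (poly r y * deriv f y + lam / 4 * f y) / (1 - y\<^sup>2)) (at y))"

lemma jacobi_solutionI:
  assumes f: "\<And>y. -1 < y \<Longrightarrow> y < 1 \<Longrightarrow> (f has_real_derivative f' y) (at y)"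
    and f': "\<And>y. -1 < y \<Longrightarrow> y < 1 \<Longrightarrow> (f' has_real_derivative (poly r y * f' y + lam / 4 * f y) / (1 - y\<^sup>2)) (at y)"
  shows "jacobi_solution r lam f"
  unfolding jacobi_solution_def
proof
  fix y :: real
  assume y: "y \<in> {-1<..<1}"
  have deriv_eq: "deriv f z = f' z" if "z \<in> {-1<..<1}" for z
    using f that by (auto intro: DERIV_imp_deriv)
  have "(deriv f has_real_derivative (poly r y * f' y + lam / 4 * f y) / (1 - y\<^sup>2)) (at y)"
    by (rule has_field_derivative_transform_within_open[OF f'[of y] _ y]) (use y deriv_eq in auto)
  then show "(f has_real_derivative deriv f y) (at y) \<and>
      (deriv f has_real_derivative (poly r y * deriv f y + lam / 4 * f y) / (1 - y\<^sup>2)) (at y)"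
    using f[of y] y deriv_eq[OF y] by simp
qed

definition jacobi_vec :: "real \<Rightarrow> (real \<Rightarrow> real) \<Rightarrow> nat \<Rightarrow> real \<Rightarrow> real" where
  "jacobi_vec lam f i y = lam ^ (i div 2) * (if even i then f y else deriv f y)"

lemma jacobi_vec_has_derivative:
  assumes "jacobi_solution r lam f" and "-1 < y" "y < 1"
  shows "(jacobi_vec lam f i has_real_derivative
     (if odd i then poly r y / (1 - y\<^sup>2) * jacobi_vec lam f i y + 1 / (4 * (1 - y\<^sup>2)) * jacobi_vec lam f (Suc i) y
      else jacobi_vec lam f (Suc i) y)) (at y)"
proof -
  have f: "(f has_real_derivative deriv f y) (at y)"
    and f': "(deriv f has_real_derivative (poly r y * deriv f y + lam / 4 * f y) / (1 - y\<^sup>2)) (at y)"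
    using assms unfolding jacobi_solution_def by auto
  show ?thesis
  proof (cases "even i")
    case True
    then have "Suc i div 2 = i div 2" by presburger
    with True DERIV_cmult[OF f, of "lam ^ (i div 2)"] show ?thesis
      by (simp add: jacobi_vec_def[abs_def])
  next
    case False
    have "(jacobi_vec lam f i has_real_derivative
        lam ^ (i div 2) * ((poly r y * deriv f y + lam / 4 * f y) / (1 - y\<^sup>2))) (at y)"
      using False DERIV_cmult[OF f', of "lam ^ (i div 2)"] by (simp add: jacobi_vec_def[abs_def])
    moreover have "Suc i div 2 = Suc (i div 2)"
      using False by presburger
    then have "lam ^ (i div 2) * ((poly r y * deriv f y + lam / 4 * f y) / (1 - y\<^sup>2))
        = poly r y / (1 - y\<^sup>2) * jacobi_vec lam f i y + 1 / (4 * (1 - y\<^sup>2)) * jacobi_vec lam f (Suc i) y"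
      using False by (simp add: jacobi_vec_def add_divide_distrib algebra_simps)
    ultimately show ?thesis
      using False by simp
  qed
qed

text \<open>The numerators of the coefficients in (deriv ^^ j) f = (\<Sum>i\<le>j. poly (deriv_coeff r j i) y / (1 - y^2) ^ j
  * jacobi_vec lam f i y), see higher_deriv_expansion; the recursion is the product rule.\<close>
fun deriv_coeff :: "real poly \<Rightarrow> nat \<Rightarrow> nat \<Rightarrow> real poly" where
  "deriv_coeff r 0 i = (if i = 0 then 1 else 0)"
| "deriv_coeff r (Suc j) i = pderiv (deriv_coeff r j i) * (1 - monom 1 2) + smult (2 * real j) (pCons 0 (deriv_coeff r j i))
     + (if odd i then r * deriv_coeff r j i else 0)
     + (if i = 0 then 0 else if odd (i - 1) then smult (1/4) (deriv_coeff r j (i - 1))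
        else deriv_coeff r j (i - 1) * (1 - monom 1 2))"

lemma deriv_coeff_eq_0: "j < i \<Longrightarrow> deriv_coeff r j i = 0"
  by (induction j arbitrary: i) (simp_all del: One_nat_def)

lemma deriv_coeff_diag:
  assumes "1 - y\<^sup>2 \<noteq> 0"
  shows "poly (deriv_coeff r j j) y / (1 - y\<^sup>2) ^ j = (1 / (4 * (1 - y\<^sup>2))) ^ (j div 2)"
proof (induction j)
  case (Suc j)
  have "poly (deriv_coeff r (Suc j) (Suc j)) y / (1 - y\<^sup>2) ^ Suc j
      = poly (deriv_coeff r j j) y / (1 - y\<^sup>2) ^ j * (if odd j then 1 / (4 * (1 - y\<^sup>2)) else 1)"
    using assms by (simp add: deriv_coeff_eq_0 poly_monom field_simps)
  moreover have "Suc j div 2 = (if odd j then Suc (j div 2) else j div 2)"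
    by presburger
  ultimately show ?case
    using Suc by simp
qed simp

lemma poly_div_power_has_derivative:
  assumes "1 - y\<^sup>2 \<noteq> 0"
  shows "((\<lambda>y. poly c y / (1 - y\<^sup>2) ^ j) has_real_derivative
          poly (pderiv c * (1 - monom 1 2) + smult (2 * real j) (pCons 0 c)) y / (1 - y\<^sup>2) ^ Suc j) (at y)"
proof -
  have "((\<lambda>y. poly c y / (1 - y\<^sup>2) ^ j) has_real_derivative
      (poly (pderiv c) y * (1 - y\<^sup>2) ^ j - poly c y * (real j * (1 - y\<^sup>2) ^ (j - 1) * (- (2 * y))))
        / ((1 - y\<^sup>2) ^ j * (1 - y\<^sup>2) ^ j)) (at y)"
    by (rule derivative_eq_intros refl poly_DERIV | use assms in simp)+
  moreover have "(poly (pderiv c) y * (1 - y\<^sup>2) ^ j - poly c y * (real j * (1 - y\<^sup>2) ^ (j - 1) * (- (2 * y))))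
        / ((1 - y\<^sup>2) ^ j * (1 - y\<^sup>2) ^ j)
      = poly (pderiv c * (1 - monom 1 2) + smult (2 * real j) (pCons 0 c)) y / (1 - y\<^sup>2) ^ Suc j"
  proof (cases j)
    case (Suc k)
    define d where "d = 1 - y\<^sup>2"
    define P where "P = (1 - y\<^sup>2) ^ k"
    have e: "(1 - y\<^sup>2) ^ j = P * d" "(1 - y\<^sup>2) ^ (j - 1) = P" "(1 - y\<^sup>2) ^ Suc j = P * d * d"
      "poly (1 - monom 1 2) y = d"
      using Suc by (simp_all add: P_def d_def poly_monom)
    have "P \<noteq> 0" "d \<noteq> 0"
      using assms by (simp_all add: P_def d_def)
    then show ?thesis
      unfolding poly_add poly_mult poly_smult e by (simp add: field_simps)
  qed (use assms in \<open>simp add: poly_monom field_simps\<close>)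
  ultimately show ?thesis by simp
qed

lemma deriv_coeff_Suc_eval:
  assumes "1 - y\<^sup>2 \<noteq> 0"
  shows "poly (deriv_coeff r (Suc j) i) y / (1 - y\<^sup>2) ^ Suc j =
    poly (pderiv (deriv_coeff r j i) * (1 - monom 1 2) + smult (2 * real j) (pCons 0 (deriv_coeff r j i))) y
      / (1 - y\<^sup>2) ^ Suc j
    + (if odd i then poly (deriv_coeff r j i) y / (1 - y\<^sup>2) ^ j * (poly r y / (1 - y\<^sup>2)) else 0)
    + (if i = 0 then 0
       else poly (deriv_coeff r j (i - 1)) y / (1 - y\<^sup>2) ^ j * (if odd (i - 1) then 1 / (4 * (1 - y\<^sup>2)) else 1))"
proof -
  define q where "q = 1 - y\<^sup>2"
  define X where "X = poly (pderiv (deriv_coeff r j i) * (1 - monom 1 2)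
    + smult (2 * real j) (pCons 0 (deriv_coeff r j i))) y"
  have "poly (1 - monom 1 2) y = q" "q \<noteq> 0" "(1 - y\<^sup>2) ^ Suc j = q ^ j * q"
    using assms by (simp_all add: q_def poly_monom)
  moreover have "poly (deriv_coeff r (Suc j) i) y = X + (if odd i then poly r y * poly (deriv_coeff r j i) y else 0)
      + (if i = 0 then 0 else if odd (i - 1) then poly (deriv_coeff r j (i - 1)) y / 4
         else poly (deriv_coeff r j (i - 1)) y * poly (1 - monom 1 2) y)"
    unfolding X_def deriv_coeff.simps(2) poly_add by simp
  ultimately show ?thesis
    unfolding q_def[symmetric] X_def[symmetric]
    by (cases "i = 0"; cases "odd i") (simp_all add: add_divide_distrib mult_ac)
qed

lemma deriv_expansion_has_derivative:
  assumes f: "jacobi_solution r lam f" and y: "-1 < y" "y < 1"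
  shows "((\<lambda>y. \<Sum>i\<le>j. poly (deriv_coeff r j i) y / (1 - y\<^sup>2) ^ j * jacobi_vec lam f i y) has_real_derivative
          (\<Sum>i\<le>Suc j. poly (deriv_coeff r (Suc j) i) y / (1 - y\<^sup>2) ^ Suc j * jacobi_vec lam f i y)) (at y)"
proof -
  have nz: "1 - y\<^sup>2 \<noteq> 0"
    using one_minus_square_pos[OF y] by simp
  define A where "A i = poly (pderiv (deriv_coeff r j i) * (1 - monom 1 2) + smult (2 * real j) (pCons 0 (deriv_coeff r j i))) y
    / (1 - y\<^sup>2) ^ Suc j" for i
  define B where "B i = poly (deriv_coeff r j i) y / (1 - y\<^sup>2) ^ j" for i
  define V where "V i = jacobi_vec lam f i y" for i
  define p where "p = poly r y / (1 - y\<^sup>2)"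
  define q where "q = 1 / (4 * (1 - y\<^sup>2))"
  have "((\<lambda>y. \<Sum>i\<le>j. poly (deriv_coeff r j i) y / (1 - y\<^sup>2) ^ j * jacobi_vec lam f i y) has_real_derivative
      (\<Sum>i\<le>j. A i * V i + B i * (if odd i then p * V i + q * V (Suc i) else V (Suc i)))) (at y)"
    unfolding A_def B_def V_def p_def q_def
    by (rule DERIV_sum, rule DERIV_cong[OF DERIV_mult[OF poly_div_power_has_derivative[OF nz]
          jacobi_vec_has_derivative[OF f y]]]) (simp add: mult.commute)
  also have "(\<Sum>i\<le>j. A i * V i + B i * (if odd i then p * V i + q * V (Suc i) else V (Suc i)))
      = (\<Sum>i\<le>j. (A i + (if odd i then B i * p else 0)) * V i)
        + (\<Sum>i\<le>j. B i * (if odd i then q else 1) * V (Suc i))"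
    by (simp add: sum.distrib[symmetric] algebra_simps, rule sum.cong, auto simp: algebra_simps)
  also have "(\<Sum>i\<le>j. (A i + (if odd i then B i * p else 0)) * V i)
      = (\<Sum>i\<le>Suc j. (A i + (if odd i then B i * p else 0)) * V i)"
    by (simp add: A_def B_def deriv_coeff_eq_0)
  also have "(\<Sum>i\<le>j. B i * (if odd i then q else 1) * V (Suc i))
      = (\<Sum>i\<le>Suc j. (if i = 0 then 0 else B (i - 1) * (if odd (i - 1) then q else 1)) * V i)"
    by (subst sum.atMost_Suc_shift) simp
  also have "(\<Sum>i\<le>Suc j. (A i + (if odd i then B i * p else 0)) * V i)
      + (\<Sum>i\<le>Suc j. (if i = 0 then 0 else B (i - 1) * (if odd (i - 1) then q else 1)) * V i)
      = (\<Sum>i\<le>Suc j. poly (deriv_coeff r (Suc j) i) y / (1 - y\<^sup>2) ^ Suc j * jacobi_vec lam f i y)"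
    unfolding sum.distrib[symmetric] V_def
    by (rule sum.cong[OF refl], unfold deriv_coeff_Suc_eval[OF nz]) (simp add: A_def B_def p_def q_def algebra_simps)
  finally show ?thesis .
qed

lemma higher_deriv_expansion:
  assumes f: "jacobi_solution r lam f" and "-1 < y" "y < 1"
  shows "(deriv ^^ j) f y = (\<Sum>i\<le>j. poly (deriv_coeff r j i) y / (1 - y\<^sup>2) ^ j * jacobi_vec lam f i y)"
  using assms(2,3)
proof (induction j arbitrary: y)
  case 0
  then show ?case by (simp add: jacobi_vec_def)
next
  case (Suc j)
  have "((deriv ^^ j) f has_real_derivative
      (\<Sum>i\<le>Suc j. poly (deriv_coeff r (Suc j) i) y / (1 - y\<^sup>2) ^ Suc j * jacobi_vec lam f i y)) (at y)"
    by (rule has_field_derivative_transform_within_open[OF deriv_expansion_has_derivative[OF f Suc.prems],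
          where S = "{-1<..<1}"]) (use Suc in auto)
  then show ?case
    by (simp add: DERIV_imp_deriv)
qed

lemma det_mat_lower_triangular:
  assumes "\<And>i j. i < j \<Longrightarrow> j < n \<Longrightarrow> L i j = 0"
  shows "det (mat n n (\<lambda>(i, j). L i j)) = (\<Prod>i<n. L i i)"
proof -
  have "det (mat n n (\<lambda>(i, j). L i j)) = prod_list (diag_mat (mat n n (\<lambda>(i, j). L i j)))"
    by (rule det_lower_triangular[of n]) (use assms in auto)
  also have "\<dots> = (\<Prod>i<n. L i i)"
    unfolding prod_list_diag_prod by (simp add: atLeast0LessThan)
  finally show ?thesis .
qed

lemma det_mat_scale_rows_cols:
  fixes A :: "'a :: comm_ring_1 mat"
  assumes A: "A \<in> carrier_mat n n"
  shows "det (mat n n (\<lambda>(i, k). r i * A $$ (i, k) * s k)) = (\<Prod>i<n. r i) * (\<Prod>k<n. s k) * det A"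
proof -
  let ?B = "mat n n (\<lambda>(i, k). r i * A $$ (i, k) * s k)"
  have "of_int (sign p) * (\<Prod>i = 0..<n. ?B $$ (i, p i))
      = (\<Prod>i<n. r i) * (\<Prod>k<n. s k) * (of_int (sign p) * (\<Prod>i = 0..<n. A $$ (i, p i)))"
    if p: "p permutes {0..<n}" for p
  proof -
    have "(\<Prod>i = 0..<n. ?B $$ (i, p i))
        = (\<Prod>i = 0..<n. r i) * (\<Prod>i = 0..<n. A $$ (i, p i)) * (\<Prod>i = 0..<n. s (p i))"
      using permutes_in_image[OF p] by (simp add: prod.distrib)
    also have "(\<Prod>i = 0..<n. s (p i)) = (\<Prod>i = 0..<n. s i)"
      using prod.permute[OF p, of s] by (simp add: comp_def)
    finally show ?thesis
      by (simp add: atLeast0LessThan ac_simps)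
  qed
  then show ?thesis
    unfolding det_def'[OF A] det_def'[of ?B n, simplified] by (simp add: sum_distrib_left)
qed

lemma wronskian_eq_det_jacobi_vec:
  assumes sol: "\<And>k. k < length fs \<Longrightarrow> jacobi_solution r (lam k) (fs ! k)" and x: "-1 < x" "x < 1"
  shows "wronskian fs x = (\<Prod>j<length fs. (1 / (4 * (1 - x\<^sup>2))) ^ (j div 2))
      * det (mat (length fs) (length fs) (\<lambda>(i, k). jacobi_vec (lam k) (fs ! k) i x))"
proof -
  define N where "N = length fs"
  define L where "L j i = poly (deriv_coeff r j i) x / (1 - x\<^sup>2) ^ j" for j i
  have nz: "1 - x\<^sup>2 \<noteq> 0"
    using one_minus_square_pos[OF x] by simp
  have "mat N N (\<lambda>(j, k). (deriv ^^ j) (fs ! k) x)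
      = mat N N (\<lambda>(j, i). L j i) * mat N N (\<lambda>(i, k). jacobi_vec (lam k) (fs ! k) i x)"
  proof (rule eq_matI)
    fix j k
    assume "j < dim_row (mat N N (\<lambda>(j, i). L j i) * mat N N (\<lambda>(i, k). jacobi_vec (lam k) (fs ! k) i x))"
      and "k < dim_col (mat N N (\<lambda>(j, i). L j i) * mat N N (\<lambda>(i, k). jacobi_vec (lam k) (fs ! k) i x))"
    then have j: "j < N" and k: "k < N" by simp_all
    have "(deriv ^^ j) (fs ! k) x = (\<Sum>i\<le>j. L j i * jacobi_vec (lam k) (fs ! k) i x)"
      unfolding L_def using higher_deriv_expansion[OF sol x] k by (simp add: N_def)
    also have "\<dots> = (\<Sum>i\<in>{0..<N}. L j i * jacobi_vec (lam k) (fs ! k) i x)"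
      by (rule sum.mono_neutral_left) (use j in \<open>auto simp: L_def deriv_coeff_eq_0\<close>)
    finally show "mat N N (\<lambda>(j, k). (deriv ^^ j) (fs ! k) x) $$ (j, k)
        = (mat N N (\<lambda>(j, i). L j i) * mat N N (\<lambda>(i, k). jacobi_vec (lam k) (fs ! k) i x)) $$ (j, k)"
      using j k by (simp add: scalar_prod_def)
  qed auto
  moreover have "det (mat N N (\<lambda>(j, i). L j i)) = (\<Prod>j<N. (1 / (4 * (1 - x\<^sup>2))) ^ (j div 2))"
    by (subst det_mat_lower_triangular) (auto simp: L_def deriv_coeff_eq_0 deriv_coeff_diag[OF nz])
  ultimately show ?thesis
    unfolding wronskian_def N_def[symmetric] by (simp add: det_mult[of _ N])
qed

lemma det_jacobi_vec_mat:
  assumes val: "\<And>k. k < n \<Longrightarrow> (fs ! k) x = F k * u k"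
    "\<And>k. k < n \<Longrightarrow> deriv (fs ! k) x = - F k * v k / (1 - x\<^sup>2)"
  shows "det (mat n n (\<lambda>(i, k). jacobi_vec (lam k) (fs ! k) i x))
    = (\<Prod>i<n. if even i then 1 else - 1 / (1 - x\<^sup>2)) * (\<Prod>k<n. F k)
      * det (mat n n (\<lambda>(i, k). lam k ^ (i div 2) * (if even i then u k else v k)))"
proof -
  have "mat n n (\<lambda>(i, k). jacobi_vec (lam k) (fs ! k) i x)
      = mat n n (\<lambda>(i, k). (if even i then 1 else - 1 / (1 - x\<^sup>2))
          * mat n n (\<lambda>(i, k). lam k ^ (i div 2) * (if even i then u k else v k)) $$ (i, k) * F k)"
    by (rule cong_mat) (simp_all add: jacobi_vec_def val)
  then show ?thesis
    by (simp add: det_mat_scale_rows_cols)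
qed

lemma sum_lessThan_Suc_div_2: "(\<Sum>j<n. Suc j div 2) = (n div 2) * (Suc n div 2)"
proof (induction n)
  case (Suc m)
  then show ?case by (cases "even m") (auto elim!: evenE oddE)
qed simp

lemma prod_wronskian_row_factors:
  fixes q :: real
  assumes "q \<noteq> 0"
  shows "(\<Prod>j<n. (1 / (4 * (4 * q))) ^ (j div 2) * (if even j then 1 else - 1 / (4 * q)))
    = 1 / ((-4) ^ (n * (n - 1) div 2) * q ^ ((n div 2) * (Suc n div 2)))"
proof -
  have "(1 / (4 * (4 * q))) ^ (j div 2) * (if even j then 1 else - 1 / (4 * q))
      = 1 / ((-4) ^ j * q ^ (Suc j div 2))" for j
  proof (cases "even j")
    case True
    then obtain p where "j = 2 * p" by (rule evenE)
    then show ?thesis by (simp add: power_mult power_mult_distrib power_divide)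
  next
    case False
    then obtain p where j: "j = 2 * p + 1" by (rule oddE)
    then have "(-4::real) ^ j = - 4 * 16 ^ p"
      by (simp add: power_mult)
    with j assms show ?thesis by (simp add: power_mult power_mult_distrib power_divide field_simps)
  qed
  then have "(\<Prod>j<n. (1 / (4 * (4 * q))) ^ (j div 2) * (if even j then 1 else - 1 / (4 * q)))
      = 1 / ((-4) ^ (\<Sum>j<n. j) * q ^ (\<Sum>j<n. Suc j div 2))"
    by (simp add: prod_dividef prod.distrib power_sum)
  also have "(\<Sum>j<n. j) = n * (n - 1) div 2"
    using Sum_Ico_nat[of 0 n] by (simp add: atLeast0LessThan)
  finally show ?thesis
    by (simp only: sum_lessThan_Suc_div_2)
qed

lemma wronskian_jacobi_solutions:
  fixes fs :: "(real \<Rightarrow> real) list"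
  defines "N \<equiv> length fs"
  assumes sol: "\<And>k. k < N \<Longrightarrow> jacobi_solution r (lam k) (fs ! k)" and x: "-1 < x" "x < 1"
    and val: "\<And>k. k < N \<Longrightarrow> (fs ! k) x = F k * u k"
      "\<And>k. k < N \<Longrightarrow> deriv (fs ! k) x = - F k * v k / (1 - x\<^sup>2)"
  shows "wronskian fs x = (\<Prod>k<N. F k) * det (mat N N (\<lambda>(i, k). lam k ^ (i div 2) * (if even i then u k else v k)))
    / ((-4) ^ (N * (N - 1) div 2) * ((1 - x) / 2 * ((1 + x) / 2)) ^ (N div 2 * (Suc N div 2)))"
proof -
  define q where "q = (1 - x) / 2 * ((1 + x) / 2)"
  have q: "q \<noteq> 0" "1 - x\<^sup>2 = 4 * q"
    using x unfolding q_def by (simp, simp add: power2_eq_square algebra_simps)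
  have "wronskian fs x = (\<Prod>j<N. (1 / (4 * (1 - x\<^sup>2))) ^ (j div 2))
      * det (mat N N (\<lambda>(i, k). jacobi_vec (lam k) (fs ! k) i x))"
    using wronskian_eq_det_jacobi_vec[of fs r lam x] sol x by (simp add: N_def)
  also have "\<dots> = (\<Prod>j<N. (1 / (4 * (4 * q))) ^ (j div 2) * (if even j then 1 else - 1 / (4 * q)))
      * (\<Prod>k<N. F k) * det (mat N N (\<lambda>(i, k). lam k ^ (i div 2) * (if even i then u k else v k)))"
    using det_jacobi_vec_mat[of N fs x F u v lam] val unfolding q(2) by (simp add: prod.distrib)
  finally show ?thesis
    unfolding prod_wronskian_row_factors[OF q(1)] by (simp add: q_def)
qed

section \<open>Gauge transforms of Jacobi polynomials\<close>

text \<open>HOL-Algebra, loaded with the determinant library, rebinds the name algebra; the Groebner basis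
  method sees the inverses and the numeral 1/2 as atoms, so their defining relations are supplied.\<close>
lemma jacobi_gauge_identity:
  fixes s t A B g h a b m P0 P1 P2 :: real
  assumes st: "s \<noteq> 0" "t \<noteq> 0" "s + t = 2"
    and A: "A * A = (1/2 - g) * A" and B: "B * B = (1/2 - h) * B"
    and ab: "a = g - 1/2 + 2 * A" "b = h - 1/2 + 2 * B"
    and ode: "t / 2 * (s / 2) * P2 + (a + 1 - (a + b + 2) * (t / 2)) * P1 + m * (m + a + b + 1) * P0 = 0"
  defines "c \<equiv> B / s - A / t"
  shows "s * t * (c * (c * P0 - P1 / 2) + (- B / s\<^sup>2 - A / t\<^sup>2) * P0 - c * P1 / 2 + P2 / 4)
    = (g - h + (g + h + 1) * (s - t) / 2) * (c * P0 - P1 / 2) - (m + A + B) * (m + A + B + g + h) * P0"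
proof -
  have "s * inverse s = 1" "t * inverse t = 1" "inverse (s\<^sup>2) = inverse s * inverse s"
    "inverse (t\<^sup>2) = inverse t * inverse t" "2 * inverse 2 = (1::real)" "inverse 4 = inverse 2 * inverse (2::real)"
    using st by (simp_all add: power2_eq_square)
  then show ?thesis
    using st(3) A B ab ode unfolding c_def by (simp only: divide_inverse) Groebner_Basis.algebra
qed

lemma powr_half_has_derivative:
  assumes "-1 < y" "y < 1"
  shows "((\<lambda>y. ((1 - y) / 2) powr A * ((1 + y) / 2) powr B) has_real_derivative
      ((1 - y) / 2) powr A * ((1 + y) / 2) powr B * (B / (1 + y) - A / (1 - y))) (at y)"
proof -
  have "0 < (1 - y) / 2" "0 < (1 + y) / 2"
    using assms by simp_all
  then show ?thesis
    by (auto intro!: derivative_eq_intros simp: powr_diff field_simps)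
qed

lemma poly_half_has_derivative:
  "((\<lambda>y. poly p ((1 - y) / 2)) has_real_derivative - poly (pderiv p) ((1 - y) / 2) / 2) (at y)"
  by (rule derivative_eq_intros refl poly_DERIV | simp)+

text \<open>A and B are exponents of the equation at y = 1 and y = -1, i.e. A \<in> {0, 1/2 - g} and
  B \<in> {0, 1/2 - h}.\<close>
lemma jacobi_solution_gauge:
  fixes A B a b :: real and m :: nat
  defines "G \<equiv> \<lambda>y. ((1 - y) / 2) powr A * ((1 + y) / 2) powr B"
    and "c \<equiv> \<lambda>y. B / (1 + y) - A / (1 - y)"
    and "P \<equiv> jacobi_poly a b m"
  assumes A: "A * A = (1/2 - g) * A" and B: "B * B = (1/2 - h) * B"
    and ab: "a = g - 1/2 + 2 * A" "b = h - 1/2 + 2 * B"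
    and f: "\<forall>y\<in>{-1<..<1}. f y = G y * poly P ((1 - y) / 2)"
  shows "jacobi_solution [:g - h, g + h + 1:] (- 4 * ((real m + A + B) * (real m + A + B + g + h))) f"
    and "-1 < y \<Longrightarrow> y < 1 \<Longrightarrow> deriv f y = G y * (c y * poly P ((1 - y) / 2) - poly (pderiv P) ((1 - y) / 2) / 2)"
proof -
  define f' where "f' y = G y * (c y * poly P ((1 - y) / 2) - poly (pderiv P) ((1 - y) / 2) / 2)" for y
  have G: "(G has_real_derivative G y * c y) (at y)" if "-1 < y" "y < 1" for y
    unfolding G_def c_def by (rule powr_half_has_derivative[OF that])
  have f_deriv: "(f has_real_derivative f' y) (at y)" if y: "-1 < y" "y < 1" for y
  proof -
    have "((\<lambda>y. G y * poly P ((1 - y) / 2)) has_real_derivative f' y) (at y)"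
      unfolding f'_def
      by (rule DERIV_cong[OF DERIV_mult[OF G[OF y] poly_half_has_derivative]]) (simp add: algebra_simps)
    then show ?thesis
      by (rule has_field_derivative_transform_within_open[where S = "{-1<..<1}"]) (use y f in auto)
  qed
  have "(f' has_real_derivative (poly [:g - h, g + h + 1:] y * f' y
      + - 4 * ((real m + A + B) * (real m + A + B + g + h)) / 4 * f y) / (1 - y\<^sup>2)) (at y)"
    if y: "-1 < y" "y < 1" for y
  proof -
    define P0 P1 P2 where "P0 = poly P ((1 - y) / 2)" and "P1 = poly (pderiv P) ((1 - y) / 2)"
      and "P2 = poly (pderiv (pderiv P)) ((1 - y) / 2)"
    define Q where "Q = c y * (c y * P0 - P1 / 2) + (- B / (1 + y)\<^sup>2 - A / (1 - y)\<^sup>2) * P0 - c y * P1 / 2 + P2 / 4"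
    have c: "(c has_real_derivative - B / (1 + y)\<^sup>2 - A / (1 - y)\<^sup>2) (at y)"
      unfolding c_def using y by (auto intro!: derivative_eq_intros simp: power2_eq_square)
    have deriv: "(f' has_real_derivative G y * Q) (at y)"
      unfolding f'_def[abs_def] Q_def P0_def P1_def P2_def
      by (rule DERIV_cong[OF DERIV_mult[OF G[OF y]
            DERIV_diff[OF DERIV_mult[OF c poly_half_has_derivative] DERIV_cdivide[OF poly_half_has_derivative]]]])
        (simp add: algebra_simps)
    have ode: "(1 - y) / 2 * ((1 + y) / 2) * P2 + (a + 1 - (a + b + 2) * ((1 - y) / 2)) * P1
        + real m * (real m + a + b + 1) * P0 = 0"
      using jacobi_poly_ode[of "(1 - y) / 2" a b m] unfolding P_def P0_def P1_def P2_def
      by (simp add: field_simps)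
    have "(1 + y) * (1 - y) * Q = (g - h + (g + h + 1) * ((1 + y) - (1 - y)) / 2) * (c y * P0 - P1 / 2)
        - (real m + A + B) * (real m + A + B + g + h) * P0"
      unfolding Q_def c_def by (rule jacobi_gauge_identity[OF _ _ _ A B ab ode]) (use y in simp_all)
    moreover have "(1 + y) * (1 - y) = 1 - y\<^sup>2" "g - h + (g + h + 1) * ((1 + y) - (1 - y)) / 2 = poly [:g - h, g + h + 1:] y"
      by (simp_all add: power2_eq_square algebra_simps)
    ultimately have "Q = (poly [:g - h, g + h + 1:] y * (c y * P0 - P1 / 2)
        - (real m + A + B) * (real m + A + B + g + h) * P0) / (1 - y\<^sup>2)"
      using one_minus_square_pos[OF y] by (simp add: eq_divide_eq ac_simps)
    also have "G y * \<dots> = (poly [:g - h, g + h + 1:] y * f' y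
        + - 4 * ((real m + A + B) * (real m + A + B + g + h)) / 4 * f y) / (1 - y\<^sup>2)"
    proof -
      have "f y = G y * P0"
        using f y by (simp add: P0_def)
      moreover have "- 4 * ((real m + A + B) * (real m + A + B + g + h)) / 4 = - ((real m + A + B) * (real m + A + B + g + h))"
        by simp
      ultimately show ?thesis
        unfolding f'_def P0_def[symmetric] P1_def[symmetric] by (simp only:) (simp add: algebra_simps)
    qed
    finally have "G y * Q = (poly [:g - h, g + h + 1:] y * f' y
        + - 4 * ((real m + A + B) * (real m + A + B + g + h)) / 4 * f y) / (1 - y\<^sup>2)" by simp
    with deriv show ?thesis
      by simp
  qed
  then show "jacobi_solution [:g - h, g + h + 1:] (- 4 * ((real m + A + B) * (real m + A + B + g + h))) f"
    using f_deriv by (intro jacobi_solutionI)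
  show "-1 < y \<Longrightarrow> y < 1 \<Longrightarrow> deriv f y = G y * (c y * poly P ((1 - y) / 2) - poly (pderiv P) ((1 - y) / 2) / 2)"
    using f_deriv by (simp add: DERIV_imp_deriv f'_def)
qed

section \<open>The seed solutions and the multi-indexed Jacobi polynomials\<close>

lemma seed_I_jacobi_solution:
  shows "jacobi_solution [:g - h, g + h + 1:] (- Etil g h (v, TI)) (mu g h (v, TI))"
    and "-1 < y \<Longrightarrow> y < 1 \<Longrightarrow> deriv (mu g h (v, TI)) y
      = - (((1 + y) / 2) powr (1/2 - h)) * zetatil g h (v, TI) y / (1 - y\<^sup>2)"
proof -
  define P where "P = jacobi_poly (g - 1/2) (1/2 - h) v"
  have mu: "\<forall>y\<in>{-1<..<1}. mu g h (v, TI) y = ((1 - y) / 2) powr 0 * ((1 + y) / 2) powr (1/2 - h) * poly P ((1 - y) / 2)"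
    by (simp add: mu_def P_def jacobiP_eq_poly)
  have lam: "- Etil g h (v, TI) = - 4 * ((real v + 0 + (1/2 - h)) * (real v + 0 + (1/2 - h) + g + h))"
    by (simp add: Etil_def algebra_simps)
  have "0 * 0 = (1/2 - g) * 0" "(1/2 - h) * (1/2 - h) = (1/2 - h) * (1/2 - h)"
    "g - 1/2 = g - 1/2 + 2 * 0" "1/2 - h = h - 1/2 + 2 * (1/2 - h)"
    by simp_all
  note gauge = jacobi_solution_gauge[of 0 g "1/2 - h" h "g - 1/2" "1/2 - h" _ v, folded P_def, OF this mu]
  show "jacobi_solution [:g - h, g + h + 1:] (- Etil g h (v, TI)) (mu g h (v, TI))"
    unfolding lam by (rule gauge)
  assume y: "-1 < y" "y < 1"
  define U P0 P1 Q where "U = ((1 + y) / 2) powr (1/2 - h)" and "P0 = poly P ((1 - y) / 2)"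
    and "P1 = poly (pderiv P) ((1 - y) / 2)" and "Q = jacobiP (g + 1/2) (- h - 1/2) (int v) y"
  have "jacobi_poly (g - 1/2 + 1) (1/2 - h - 1) v = jacobi_poly (g + 1/2) (- h - 1/2) v"
    by (rule arg_cong2[where f = "\<lambda>a b. jacobi_poly a b v"]) simp_all
  then have contiguous: "((1 - y) / 2 - 1) * P1 + (1/2 - h) * P0 = (1/2 - h + real v) * Q"
    using jacobi_poly_contiguous_b[of "(1 - y) / 2" "g - 1/2" "1/2 - h" v]
    by (simp add: P_def P0_def P1_def Q_def jacobiP_eq_poly)
  have "(1/2 - h) / (1 + y) * P0 - P1 / 2 = (((1 - y) / 2 - 1) * P1 + (1/2 - h) * P0) / (1 + y)"
    using y by (simp add: field_simps)
  also have "\<dots> = (1/2 - h + real v) * Q / (1 + y)"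
    unfolding contiguous ..
  finally have contiguous': "(1/2 - h) / (1 + y) * P0 - P1 / 2 = (1/2 - h + real v) * Q / (1 + y)" .
  have "deriv (mu g h (v, TI)) y = U * ((1/2 - h) / (1 + y) * P0 - P1 / 2)"
    using gauge(2)[OF y] y by (simp add: U_def P0_def P1_def)
  also have "\<dots> = - U * ((h - 1/2 - real v) * Q) / (1 + y)"
    unfolding contiguous' by (simp add: algebra_simps)
  also have "\<dots> = - U * ((h - 1/2 - real v) * Q) * (1 - y) / ((1 + y) * (1 - y))"
    using y by simp
  also have "\<dots> = - (((1 + y) / 2) powr (1/2 - h)) * zetatil g h (v, TI) y / (1 - y\<^sup>2)"
  proof -
    have "zetatil g h (v, TI) y = (h - 1/2 - real v) * Q * (1 - y)" "(1 + y) * (1 - y) = 1 - y\<^sup>2"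
      by (simp_all add: zetatil_def Q_def power2_eq_square algebra_simps)
    then show ?thesis
      unfolding U_def by (simp only: mult.assoc)
  qed
  finally show "deriv (mu g h (v, TI)) y = - (((1 + y) / 2) powr (1/2 - h)) * zetatil g h (v, TI) y / (1 - y\<^sup>2)" .
qed

lemma seed_II_jacobi_solution:
  shows "jacobi_solution [:g - h, g + h + 1:] (- Etil g h (v, TII)) (mu g h (v, TII))"
    and "-1 < y \<Longrightarrow> y < 1 \<Longrightarrow> deriv (mu g h (v, TII)) y
      = - (((1 - y) / 2) powr (1/2 - g)) * zetatil g h (v, TII) y / (1 - y\<^sup>2)"
proof -
  define P where "P = jacobi_poly (1/2 - g) (h - 1/2) v"
  have mu: "\<forall>y\<in>{-1<..<1}. mu g h (v, TII) y = ((1 - y) / 2) powr (1/2 - g) * ((1 + y) / 2) powr 0 * poly P ((1 - y) / 2)"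
    by (simp add: mu_def P_def jacobiP_eq_poly)
  have lam: "- Etil g h (v, TII) = - 4 * ((real v + (1/2 - g) + 0) * (real v + (1/2 - g) + 0 + g + h))"
    by (simp add: Etil_def algebra_simps)
  have "(1/2 - g) * (1/2 - g) = (1/2 - g) * (1/2 - g)" "0 * 0 = (1/2 - h) * 0"
    "1/2 - g = g - 1/2 + 2 * (1/2 - g)" "h - 1/2 = h - 1/2 + 2 * 0"
    by simp_all
  note gauge = jacobi_solution_gauge[of "1/2 - g" g 0 h "1/2 - g" "h - 1/2" _ v, folded P_def, OF this mu]
  show "jacobi_solution [:g - h, g + h + 1:] (- Etil g h (v, TII)) (mu g h (v, TII))"
    unfolding lam by (rule gauge)
  assume y: "-1 < y" "y < 1"
  define U P0 P1 Q where "U = ((1 - y) / 2) powr (1/2 - g)" and "P0 = poly P ((1 - y) / 2)"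
    and "P1 = poly (pderiv P) ((1 - y) / 2)" and "Q = jacobiP (- g - 1/2) (h + 1/2) (int v) y"
  have "jacobi_poly (1/2 - g - 1) (h - 1/2 + 1) v = jacobi_poly (- g - 1/2) (h + 1/2) v"
    by (rule arg_cong2[where f = "\<lambda>a b. jacobi_poly a b v"]) simp_all
  then have contiguous: "(1 - y) / 2 * P1 + (1/2 - g) * P0 = (1/2 - g + real v) * Q"
    using jacobi_poly_contiguous_a[of "(1 - y) / 2" "1/2 - g" "h - 1/2" v]
    by (simp add: P_def P0_def P1_def Q_def jacobiP_eq_poly)
  have "- ((1/2 - g) * P0 / (1 - y)) - P1 / 2 = - ((1 - y) / 2 * P1 + (1/2 - g) * P0) / (1 - y)"
    using y by (simp add: field_simps)
  also have "\<dots> = - ((1/2 - g + real v) * Q) / (1 - y)"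
    unfolding contiguous ..
  finally have contiguous': "- ((1/2 - g) * P0 / (1 - y)) - P1 / 2 = - ((1/2 - g + real v) * Q) / (1 - y)" .
  have "deriv (mu g h (v, TII)) y = U * (- ((1/2 - g) * P0 / (1 - y)) - P1 / 2)"
    using gauge(2)[OF y] y by (simp add: U_def P0_def P1_def)
  also have "\<dots> = - U * ((1/2 - g + real v) * Q) / (1 - y)"
    unfolding contiguous' by (simp add: algebra_simps)
  also have "\<dots> = - U * ((1/2 - g + real v) * Q) * (1 + y) / ((1 - y) * (1 + y))"
    using y by simp
  also have "\<dots> = - (((1 - y) / 2) powr (1/2 - g)) * zetatil g h (v, TII) y / (1 - y\<^sup>2)"
  proof -
    have "zetatil g h (v, TII) y = (1/2 - g + real v) * Q * (1 + y)" "(1 - y) * (1 + y) = 1 - y\<^sup>2"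
      by (simp_all add: zetatil_def Q_def power2_eq_square algebra_simps)
    then show ?thesis
      unfolding U_def by (simp only: mult.assoc)
  qed
  finally show "deriv (mu g h (v, TII)) y = - (((1 - y) / 2) powr (1/2 - g)) * zetatil g h (v, TII) y / (1 - y\<^sup>2)" .
qed

lemma Pn_jacobi_solution:
  shows "jacobi_solution [:g - h, g + h + 1:] (- En g h n) (Pn g h n)"
    and "-1 < y \<Longrightarrow> y < 1 \<Longrightarrow> deriv (Pn g h n) y = - zetan g h n y / (1 - y\<^sup>2)"
proof -
  define P where "P = jacobi_poly (g - 1/2) (h - 1/2) n"
  have Pn: "\<forall>y\<in>{-1<..<1}. Pn g h n y = ((1 - y) / 2) powr 0 * ((1 + y) / 2) powr 0 * poly P ((1 - y) / 2)"
    by (simp add: Pn_def P_def jacobiP_eq_poly)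
  have lam: "- En g h n = - 4 * ((real n + 0 + 0) * (real n + 0 + 0 + g + h))"
    by (simp add: En_def algebra_simps)
  have "0 * 0 = (1/2 - g) * (0::real)" "0 * 0 = (1/2 - h) * (0::real)"
    "g - 1/2 = g - 1/2 + 2 * 0" "h - 1/2 = h - 1/2 + 2 * 0"
    by simp_all
  note gauge = jacobi_solution_gauge[of 0 g 0 h "g - 1/2" "h - 1/2" _ n, folded P_def, OF this Pn]
  show "jacobi_solution [:g - h, g + h + 1:] (- En g h n) (Pn g h n)"
    unfolding lam by (rule gauge)
  assume y: "-1 < y" "y < 1"
  have "deriv (Pn g h n) y = - poly (pderiv P) ((1 - y) / 2) / 2"
    using gauge(2)[OF y] y by simp
  also have "\<dots> = - zetan g h n y / (1 - y\<^sup>2)"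
  proof (cases n)
    case 0
    then show ?thesis
      by (simp add: P_def jacobi_poly_def monom_0 zetan_def jacobiP_def)
  next
    case (Suc m)
    have "jacobi_poly (g - 1/2 + 1) (h - 1/2 + 1) m = jacobi_poly (g + 1/2) (h + 1/2) m"
      by (rule arg_cong2[where f = "\<lambda>a b. jacobi_poly a b m"]) simp_all
    moreover have "1 - y\<^sup>2 \<noteq> 0"
      using one_minus_square_pos[OF y] by simp
    ultimately show ?thesis
      using Suc by (simp add: P_def pderiv_jacobi_poly zetan_def jacobiP_eq_poly field_simps)
  qed
  finally show "deriv (Pn g h n) y = - zetan g h n y / (1 - y\<^sup>2)" .
qed

definition seed_gauge :: "real \<Rightarrow> real \<Rightarrow> nat \<times> seedtype \<Rightarrow> real \<Rightarrow> real" where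
  "seed_gauge g h d y =
     (case snd d of TI \<Rightarrow> ((1 + y) / 2) powr (1/2 - h) | TII \<Rightarrow> ((1 - y) / 2) powr (1/2 - g))"

lemma mu_eq_seed_gauge: "mu g h d y = seed_gauge g h d y * xi g h d y"
  by (cases d; cases "snd d") (auto simp: mu_def xi_def seed_gauge_def)

lemma seed_jacobi_solution:
  shows "jacobi_solution [:g - h, g + h + 1:] (- Etil g h d) (mu g h d)"
    and "-1 < y \<Longrightarrow> y < 1 \<Longrightarrow> deriv (mu g h d) y = - seed_gauge g h d y * zetatil g h d y / (1 - y\<^sup>2)"
  by (cases d; cases "snd d"; simp add: seed_I_jacobi_solution seed_II_jacobi_solution seed_gauge_def)+

lemma prod_seed_gauge:
  assumes "-1 < x" "x < 1"
  shows "(\<Prod>k<length D. seed_gauge g h (D ! k) x)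
    = ((1 + x) / 2) powr ((1/2 - h) * real (MI D)) * ((1 - x) / 2) powr ((1/2 - g) * real (MII D))"
proof (induction D)
  case (Cons d D)
  have "(\<Prod>k<length (d # D). seed_gauge g h ((d # D) ! k) x)
      = seed_gauge g h d x * (\<Prod>k<length D. seed_gauge g h (D ! k) x)"
    by (simp add: prod.lessThan_Suc_shift del: prod.lessThan_Suc)
  moreover have "z powr (c * real (Suc k)) = z powr c * z powr (c * real k)" for z c :: real and k
    by (simp add: powr_add[symmetric] algebra_simps)
  ultimately show ?case
    using Cons by (cases "snd d") (simp_all add: seed_gauge_def MI_def MII_def)
qed (use assms in \<open>simp add: MI_def MII_def\<close>)

lemma powr_combine_power: "0 < z \<Longrightarrow> z powr a * z powr b / z ^ K = z powr (a + b - real K)"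
  by (simp add: powr_add powr_diff powr_realpow)

lemma PD_eq_det:
  fixes D :: "(nat \<times> seedtype) list"
  assumes x: "-1 < x" "x < 1"
  defines "K \<equiv> Suc (length D) div 2 * (Suc (Suc (length D)) div 2)"
  shows "PD g h D n x = det (amat g h D n x) / (-4) ^ (length D * (length D + 1) div 2)
    * ((1 - x) / 2) powr (real (MII D * (MI D + 1)) - real K)
    * ((1 + x) / 2) powr (real (MI D * (MII D + 1)) - real K)"
proof -
  define M where "M = length D"
  define fs where "fs = map (mu g h) D @ [Pn g h n]"
  define lam where "lam k = (if k < M then - Etil g h (D ! k) else - En g h n)" for k
  define F where "F k = (if k < M then seed_gauge g h (D ! k) x else 1)" for k
  define u where "u k = (if k < M then xi g h (D ! k) x else Pn g h n x)" for k
  define v where "v k = (if k < M then zetatil g h (D ! k) x else zetan g h n x)" for k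
  define w z where "w = (1 - x) / 2" and "z = (1 + x) / 2"
  have wz: "0 < w" "0 < z"
    using x by (simp_all add: w_def z_def)
  have len: "length fs = Suc M"
    by (simp add: fs_def M_def)
  have nth: "fs ! k = (if k < M then mu g h (D ! k) else Pn g h n)" if "k < length fs" for k
    using that by (auto simp: fs_def M_def nth_append)
  have "wronskian fs x = (\<Prod>k<length fs. F k)
      * det (mat (length fs) (length fs) (\<lambda>(i, k). lam k ^ (i div 2) * (if even i then u k else v k)))
      / ((-4) ^ (length fs * (length fs - 1) div 2)
        * ((1 - x) / 2 * ((1 + x) / 2)) ^ (length fs div 2 * (Suc (length fs) div 2)))"
    by (rule wronskian_jacobi_solutions[where r = "[:g - h, g + h + 1:]", OF _ x])
      (auto simp: nth lam_def F_def u_def v_def mu_eq_seed_gauge seed_jacobi_solution Pn_jacobi_solution x)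
  moreover have "mat (Suc M) (Suc M) (\<lambda>(i, k). lam k ^ (i div 2) * (if even i then u k else v k)) = amat g h D n x"
    unfolding amat_def by (rule cong_mat) (auto simp: lam_def u_def v_def M_def)
  moreover have "(\<Prod>k<Suc M. F k) = z powr ((1/2 - h) * real (MI D)) * w powr ((1/2 - g) * real (MII D))"
    using prod_seed_gauge[OF x, of g h D] by (simp add: F_def M_def w_def z_def)
  ultimately have W: "wronskian fs x = z powr ((1/2 - h) * real (MI D)) * w powr ((1/2 - g) * real (MII D))
      * det (amat g h D n x) / ((-4) ^ (M * (M + 1) div 2) * (w * z) ^ K)"
    by (simp add: len K_def M_def w_def z_def mult.commute)
  have "PD g h D n x = wronskian fs x * w powr ((real (MI D) + g + 1/2) * real (MII D))
      * z powr ((real (MII D) + h + 1/2) * real (MI D))"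
    by (simp add: PD_def fs_def w_def z_def)
  also have "\<dots> = det (amat g h D n x) / (-4) ^ (M * (M + 1) div 2)
      * (w powr ((1/2 - g) * real (MII D)) * w powr ((real (MI D) + g + 1/2) * real (MII D)) / w ^ K)
      * (z powr ((1/2 - h) * real (MI D)) * z powr ((real (MII D) + h + 1/2) * real (MI D)) / z ^ K)"
    unfolding W by (simp add: power_mult_distrib ac_simps)
  also have "\<dots> = det (amat g h D n x) / (-4) ^ (M * (M + 1) div 2)
      * w powr (real (MII D * (MI D + 1)) - real K) * z powr (real (MI D * (MII D + 1)) - real K)"
    using wz by (simp add: powr_combine_power algebra_simps)
  finally show ?thesis
    by (simp add: M_def w_def z_def)
qed

lemma XiD_eq_det:
  fixes D :: "(nat \<times> seedtype) list"
  assumes x: "-1 < x" "x < 1"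
  defines "K \<equiv> length D div 2 * (Suc (length D) div 2)"
  shows "XiD g h D x = det (bmat g h D x) / (-4) ^ (length D * (length D - 1) div 2)
    * ((1 - x) / 2 * ((1 + x) / 2)) powr (real (MI D * MII D) - real K)"
proof -
  define M where "M = length D"
  define fs where "fs = map (mu g h) D"
  define w z where "w = (1 - x) / 2" and "z = (1 + x) / 2"
  have wz: "0 < w" "0 < z"
    using x by (simp_all add: w_def z_def)
  have "wronskian fs x = (\<Prod>k<length fs. seed_gauge g h (D ! k) x)
      * det (mat (length fs) (length fs) (\<lambda>(i, k). (- Etil g h (D ! k)) ^ (i div 2)
          * (if even i then xi g h (D ! k) x else zetatil g h (D ! k) x)))
      / ((-4) ^ (length fs * (length fs - 1) div 2)
        * ((1 - x) / 2 * ((1 + x) / 2)) ^ (length fs div 2 * (Suc (length fs) div 2)))"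
    by (rule wronskian_jacobi_solutions[where r = "[:g - h, g + h + 1:]", OF _ x])
      (auto simp: fs_def mu_eq_seed_gauge seed_jacobi_solution x)
  then have W: "wronskian fs x = z powr ((1/2 - h) * real (MI D)) * w powr ((1/2 - g) * real (MII D))
      * det (bmat g h D x) / ((-4) ^ (M * (M - 1) div 2) * (w * z) ^ K)"
    using prod_seed_gauge[OF x, of g h D] by (simp add: bmat_def fs_def K_def M_def w_def z_def mult.commute)
  have "XiD g h D x = wronskian fs x * w powr ((real (MI D) + g - 1/2) * real (MII D))
      * z powr ((real (MII D) + h - 1/2) * real (MI D))"
    by (simp add: XiD_def fs_def w_def z_def)
  also have "\<dots> = det (bmat g h D x) / (-4) ^ (M * (M - 1) div 2)
      * (w powr ((1/2 - g) * real (MII D)) * w powr ((real (MI D) + g - 1/2) * real (MII D)) / w ^ K)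
      * (z powr ((1/2 - h) * real (MI D)) * z powr ((real (MII D) + h - 1/2) * real (MI D)) / z ^ K)"
    unfolding W by (simp add: power_mult_distrib ac_simps)
  also have "\<dots> = det (bmat g h D x) / (-4) ^ (M * (M - 1) div 2)
      * (w * z) powr (real (MI D * MII D) - real K)"
    using wz by (simp add: powr_combine_power powr_mult algebra_simps)
  finally show ?thesis
    by (simp add: M_def w_def z_def)
qed

lemma floor_half_difference_exponents:
  fixes p q :: nat
  defines "s \<equiv> \<lfloor>(real p - real q) / 2\<rfloor>" and "s' \<equiv> \<lfloor>- ((real p - real q) / 2)\<rfloor>"
    and "e \<equiv> int (p + q) - 2 * int ((p + q) div 2)"
  shows "real (q * (p + 1)) - real (Suc (p + q) div 2 * (Suc (Suc (p + q)) div 2)) = - real_of_int ((s + 1) * (s + e))"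
    and "real (p * (q + 1)) - real (Suc (p + q) div 2 * (Suc (Suc (p + q)) div 2)) = - real_of_int ((s' + 1) * (s' + e))"
    and "real (p * q) - real ((p + q) div 2 * (Suc (p + q) div 2)) = - real_of_int (s * (s + e))"
proof -
  obtain m where "p + q = 2 * m \<or> p + q = 2 * m + 1"
    by (metis oddE evenE)
  then have "int q * (int p + 1) - int (Suc (p + q) div 2 * (Suc (Suc (p + q)) div 2)) = - ((s + 1) * (s + e))
    \<and> int p * (int q + 1) - int (Suc (p + q) div 2 * (Suc (Suc (p + q)) div 2)) = - ((s' + 1) * (s' + e))
    \<and> int p * int q - int ((p + q) div 2 * (Suc (p + q) div 2)) = - (s * (s + e))"
  proof
    assume pq: "p + q = 2 * m"
    then have "real p + real q = 2 * real m"
      by (metis of_nat_add of_nat_mult of_nat_numeral)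
    then have "s = int p - int m" "s' = int m - int p"
      unfolding s_def s'_def floor_eq_iff by (simp_all add: field_simps)
    moreover have "e = 0" "(p + q) div 2 = m" "Suc (p + q) div 2 = m" "Suc (Suc (p + q)) div 2 = m + 1"
      unfolding e_def pq by simp_all
    moreover have "int p = int m + s" "int q = int m - s"
      using pq calculation(1) by linarith+
    ultimately show ?thesis
      by (simp only:) (simp add: algebra_simps)
  next
    assume pq: "p + q = 2 * m + 1"
    then have "real p + real q = 2 * real m + 1"
      by (metis of_nat_add of_nat_mult of_nat_numeral of_nat_1)
    then have "s = int p - int m - 1" "s' = int m - int p"
      unfolding s_def s'_def floor_eq_iff by (simp_all add: field_simps)
    moreover have "e = 1" "(p + q) div 2 = m" "Suc (p + q) div 2 = m + 1" "Suc (Suc (p + q)) div 2 = m + 1"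
      unfolding e_def pq by simp_all
    moreover have "int p = int m + s + 1" "int q = int m - s"
      using pq calculation(1) by linarith+
    ultimately show ?thesis
      by (simp only:) (simp add: algebra_simps)
  qed
  moreover have "real (a * (b + 1)) - real c = real_of_int (int a * (int b + 1) - int c)"
    and "real (a * b) - real c = real_of_int (int a * int b - int c)" for a b c
    by (simp_all add: algebra_simps)
  ultimately show "real (q * (p + 1)) - real (Suc (p + q) div 2 * (Suc (Suc (p + q)) div 2)) = - real_of_int ((s + 1) * (s + e))"
    and "real (p * (q + 1)) - real (Suc (p + q) div 2 * (Suc (Suc (p + q)) div 2)) = - real_of_int ((s' + 1) * (s' + e))"
    and "real (p * q) - real ((p + q) div 2 * (Suc (p + q) div 2)) = - real_of_int (s * (s + e))"
    by (simp_all only: of_int_minus[symmetric] of_int_eq_iff)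
qed

lemma MI_add_MII: "MI D + MII D = length D"
  unfolding MI_def MII_def
proof (induction D)
  case (Cons d D)
  then show ?case by (cases "snd d") simp_all
qed simp

lemma power_int_minus_of_nat: "(a :: real) powi (- int k) = 1 / a ^ k"
  by (simp add: power_int_minus divide_inverse)

theorem mainTheorem4:
  fixes g h :: real and D :: "(nat \<times> seedtype) list" and n :: nat and x :: real
  assumes "g > 1/2" and "h > 1/2"
    and "distinct D" and "\<forall>d\<in>set D. seed_ok g h d"
    and "-1 < x" and "x < 1"
  shows "let M = length D; M' = (real (MI D) - real (MII D)) / 2;
             fM = \<lfloor>M'\<rfloor>; fmM = \<lfloor>- M'\<rfloor>; e = int M - 2 * int (M div 2) in
         PD g h D n x = (-4) powi (- int (M * (M + 1) div 2)) * det (amat g h D n x)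
            * ((1 - x) / 2) powr (- real_of_int ((fM + 1) * (fM + e)))
            * ((1 + x) / 2) powr (- real_of_int ((fmM + 1) * (fmM + e)))
       \<and> XiD g h D x = (-4) powi (- int (M * (M - 1) div 2)) * det (bmat g h D x)
            * ((1 - x) / 2 * ((1 + x) / 2)) powr (- real_of_int (fM * (fM + e)))"
proof -
  define p q where "p = MI D" and "q = MII D"
  have M: "length D = p + q"
    unfolding p_def q_def by (simp add: MI_add_MII)
  note PD = PD_eq_det[where D = D and g = g and h = h and n = n, OF \<open>-1 < x\<close> \<open>x < 1\<close>,
      folded p_def q_def, unfolded M]
    and XiD = XiD_eq_det[where D = D and g = g and h = h, OF \<open>-1 < x\<close> \<open>x < 1\<close>,
      folded p_def q_def, unfolded M]
  show ?thesis
    unfolding Let_def p_def[symmetric] q_def[symmetric] M PD XiD floor_half_difference_exponents power_int_minus_of_nat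
    by simp
qed

end
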